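(* Let $P\in\mathcal{N}_2$ via the pair of chain covers $\{\mathcal{C}_1,\mathcal{C}_2\}$. Let $Q\subseteq P$ be a diamond consisting of saturated chains $\bm{a}$ and $\bm{b}$ with common minimum $x$ and common maximum $y$, and suppose that $Q\cup\bm{C}\cup\bm{D}$ is a diamond with bottom chain $\bm{C}$ of length $k$ and top chain $\bm{D}$ of length $l$ in $P$. Suppose $Q$ has Type I with respect to $\{\mathcal{C}_1,\mathcal{C}_2\}$. Then, after possibly interchanging the roles of $\mathcal{C}_1$ and $\mathcal{C}_2$, there is a chain of $\mathcal{C}_1$ containing $(\bm{C}\cup\bm{a})\setminus\{y\}$, a chain of $\mathcal{C}_2$ containing $(\bm{C}\cup\bm{b})\setminus\{y\}$, a chain of $\mathcal{C}_2$ containing $(\bm{a}\cup\bm{D})\setminus\{x\}$, and a chain of $\mathcal{C}_1$ containing $(\bm{b}\cup\bm{D})\setminus\{x\}$. Moreover, $$\max\{|\bm{C}|,|\bm{D}|\} < \min\{|\bm{a}|-2,\ |\bm{b}|-2\}.$$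
   Context: All posets are finite; $|\cdot|$ denotes number of elements. An edge of a poset is a covering relation $x \lessdot y$. A chain cover of a poset $P$ is a set of pairwise disjoint saturated chains whose union is $P$. A labeling of $P$ is a map $\lambda:P\to\mathbb{R}$. For a chain cover $\mathcal{C}$, $\mathcal{C}$-sorting a labeling means: for each chain $\bm{c}\in\mathcal{C}$, permute the labels $\{\lambda(v): v\in \bm{c}\}$ among the elements of $\bm{c}$ so that they are non-decreasing from the minimum of $\bm{c}$ to its maximum. A finite poset $P$ is in $\mathcal{N}_2$ via $\{\mathcal{C}_1,\mathcal{C}_2\}$ if $\{\mathcal{C}_1,\mathcal{C}_2\}$ is an unordered pair of chain covers of $P$ such that (1) for every labeling of $P$ and for $i=1$ and $i=2$, first $\mathcal{C}_i$-sorting and then $\mathcal{C}_{3-i}$-sorting leaves the labels non-decreasing along every chain of $\mathcal{C}_i$; and (2) every edge of $P$ is contained in some chain of $\mathcal{C}_1$ or of $\mathcal{C}_2$. A diamond in a poset is a convex subposet (i.e. $u\le w\le v$ with $u,v$ in it implies $w$ in it) that is the union of two distinct saturated chains which intersect only in a common minimal element and a common maximal element. A diamond with bottom chain of length $k$ and top chain of length $l$ is a convex subposet consisting of a diamond with minimum $x$ and maximum $y$, a chain $\bm{C}=\{w_k\lessdot\cdots\lessdot w_1\}$ of $k$ elements with $w_1\lessdot x$, and a chain $\bm{D}=\{z_1\lessdot\cdots\lessdot z_l\}$ of $l$ elements with $y\lessdot z_1$, with no other elements or relations among these elements than those generated by the stated ones. A diamond with chains $\bm{a},\bm{b}$ (minimum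 $x$, maximum $y$) has Type I with respect to $\{\mathcal{C}_1,\mathcal{C}_2\}$ if, after possibly interchanging $\mathcal{C}_1$ and $\mathcal{C}_2$, there is a chain of $\mathcal{C}_1$ containing $\bm{a}\setminus\{y\}$, a chain of $\mathcal{C}_2$ containing $\bm{b}\setminus\{y\}$, a chain of $\mathcal{C}_1$ containing $\bm{b}\setminus\{x\}$, and a chain of $\mathcal{C}_2$ containing $\bm{a}\setminus\{x\}$. *)

theory Defs
  imports Complex_Main
begin

text \<open>A finite poset is represented as a finite carrier set P inside a type of
class order, with the induced order.\<close>

definition covers :: "'a::order set \<Rightarrow> 'a \<Rightarrow> 'a \<Rightarrow> bool" where
  "covers P u v \<longleftrightarrow> u \<in> P \<and> v \<in> P \<and> u < v \<and> \<not> (\<exists>w\<in>P. u < w \<and> w < v)"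

definition sat_chain :: "'a::order set \<Rightarrow> 'a set \<Rightarrow> bool" where
  "sat_chain P c \<longleftrightarrow> c \<noteq> {} \<and> c \<subseteq> P \<and>
     (\<forall>u\<in>c. \<forall>v\<in>c. u \<le> v \<or> v \<le> u) \<and>
     (\<forall>u\<in>c. \<forall>v\<in>c. u < v \<and> \<not> (\<exists>w\<in>c. u < w \<and> w < v) \<longrightarrow> covers P u v)"

definition chain_cover :: "'a::order set \<Rightarrow> 'a set set \<Rightarrow> bool" where
  "chain_cover P C \<longleftrightarrow> (\<forall>c\<in>C. sat_chain P c) \<and> \<Union>C = P \<and>
     (\<forall>c\<in>C. \<forall>d\<in>C. c \<noteq> d \<longrightarrow> c \<inter> d = {})"

definition csort :: "'a::order set set \<Rightarrow> ('a \<Rightarrow> real) \<Rightarrow> ('a \<Rightarrow> real) \<Rightarrow> bool" where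
  "csort C lam mu \<longleftrightarrow> (\<forall>c\<in>C.
     (\<exists>\<sigma>. bij_betw \<sigma> c c \<and> (\<forall>v\<in>c. mu v = lam (\<sigma> v))) \<and>
     (\<forall>u\<in>c. \<forall>v\<in>c. u \<le> v \<longrightarrow> mu u \<le> mu v))"

definition nondecr_along :: "'a::order set set \<Rightarrow> ('a \<Rightarrow> real) \<Rightarrow> bool" where
  "nondecr_along C mu \<longleftrightarrow> (\<forall>c\<in>C. \<forall>u\<in>c. \<forall>v\<in>c. u \<le> v \<longrightarrow> mu u \<le> mu v)"

definition sort_compat :: "'a::order set set \<Rightarrow> 'a set set \<Rightarrow> bool" where
  "sort_compat C1 C2 \<longleftrightarrow>
     (\<forall>lam mu nu. csort C1 lam mu \<longrightarrow> csort C2 mu nu \<longrightarrow> nondecr_along C1 nu)"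

definition in_N2 :: "'a::order set \<Rightarrow> 'a set set \<Rightarrow> 'a set set \<Rightarrow> bool" where
  "in_N2 P C1 C2 \<longleftrightarrow> finite P \<and> chain_cover P C1 \<and> chain_cover P C2 \<and>
     sort_compat C1 C2 \<and> sort_compat C2 C1 \<and>
     (\<forall>u v. covers P u v \<longrightarrow> (\<exists>c\<in>C1 \<union> C2. u \<in> c \<and> v \<in> c))"

definition convex_in :: "'a::order set \<Rightarrow> 'a set \<Rightarrow> bool" where
  "convex_in P Q \<longleftrightarrow> Q \<subseteq> P \<and> (\<forall>u\<in>Q. \<forall>v\<in>Q. \<forall>w\<in>P. u \<le> w \<and> w \<le> v \<longrightarrow> w \<in> Q)"

definition diamond :: "'a::order set \<Rightarrow> 'a set \<Rightarrow> 'a set \<Rightarrow> 'a set \<Rightarrow> 'a \<Rightarrow> 'a \<Rightarrow> bool" where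
  "diamond P Q a b x y \<longleftrightarrow> convex_in P Q \<and> Q = a \<union> b \<and>
     sat_chain P a \<and> sat_chain P b \<and> a \<noteq> b \<and> a \<inter> b = {x, y} \<and>
     x \<in> a \<and> x \<in> b \<and> y \<in> a \<and> y \<in> b \<and>
     (\<forall>u\<in>a \<union> b. x \<le> u \<and> u \<le> y)"

text \<open>Q \<union> {w 1..w k} \<union> {z 1..z l} is a diamond with bottom chain
w k \<lessdot> ... \<lessdot> w 1 \<lessdot> x of length k and top chain y \<lessdot> z 1 \<lessdot> ... \<lessdot> z l of length l:
a convex subposet with no other elements, and whose order is exactly the one
generated by the order of the diamond and the stated covering relations.\<close>
definition diamond_ext ::
  "'a::order set \<Rightarrow> 'a set \<Rightarrow> 'a set \<Rightarrow> 'a set \<Rightarrow> 'a \<Rightarrow> 'a \<Rightarrow> nat \<Rightarrow> (nat \<Rightarrow> 'a) \<Rightarrow> nat \<Rightarrow> (nat \<Rightarrow> 'a) \<Rightarrow> bool" where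
  "diamond_ext P Q a b x y k w l z \<longleftrightarrow>
     diamond P Q a b x y \<and> 1 \<le> k \<and> 1 \<le> l \<and>
     inj_on w {1..k} \<and> inj_on z {1..l} \<and>
     w ` {1..k} \<inter> Q = {} \<and> z ` {1..l} \<inter> Q = {} \<and> w ` {1..k} \<inter> z ` {1..l} = {} \<and>
     convex_in P (Q \<union> w ` {1..k} \<union> z ` {1..l}) \<and>
     (\<forall>i. 1 \<le> i \<and> i < k \<longrightarrow> covers P (w (Suc i)) (w i)) \<and> covers P (w 1) x \<and>
     (\<forall>i. 1 \<le> i \<and> i < l \<longrightarrow> covers P (z i) (z (Suc i))) \<and> covers P y (z 1) \<and>
     (let R = Q \<union> w ` {1..k} \<union> z ` {1..l};
          G = {(u, v). u \<in> Q \<and> v \<in> Q \<and> u \<le> v}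
              \<union> {(w (Suc i), w i) | i. 1 \<le> i \<and> i < k} \<union> {(w 1, x), (y, z 1)}
              \<union> {(z i, z (Suc i)) | i. 1 \<le> i \<and> i < l}
      in \<forall>u\<in>R. \<forall>v\<in>R. u \<le> v \<longleftrightarrow> (u, v) \<in> G\<^sup>*)"

definition typeI_ord :: "'a set set \<Rightarrow> 'a set set \<Rightarrow> 'a set \<Rightarrow> 'a set \<Rightarrow> 'a \<Rightarrow> 'a \<Rightarrow> bool" where
  "typeI_ord C1 C2 a b x y \<longleftrightarrow>
     (\<exists>c\<in>C1. a - {y} \<subseteq> c) \<and> (\<exists>c\<in>C2. b - {y} \<subseteq> c) \<and>
     (\<exists>c\<in>C1. b - {x} \<subseteq> c) \<and> (\<exists>c\<in>C2. a - {x} \<subseteq> c)"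

definition typeI :: "'a set set \<Rightarrow> 'a set set \<Rightarrow> 'a set \<Rightarrow> 'a set \<Rightarrow> 'a \<Rightarrow> 'a \<Rightarrow> bool" where
  "typeI C1 C2 a b x y \<longleftrightarrow> typeI_ord C1 C2 a b x y \<or> typeI_ord C2 C1 a b x y"

end

theory Submission
  imports Defs "HOL-Library.Dual_Ordered_Lattice"
begin

text \<open>
  Everything rests on one sorting argument. If \<open>S\<close> meets every chain of \<open>C1\<close> in an up-set,
  then the 0/1-labeling of \<open>S\<close> is already \<open>C1\<close>-sorted, and \<open>C2\<close>-sorting it labels with 1
  exactly the \<open>card (S \<inter> d)\<close> largest elements of every chain \<open>d\<close> of \<open>C2\<close>; by
  compatibility this set is again an up-set along every chain of \<open>C1\<close>.

  Let \<open>A2 \<in> C2\<close> contain \<open>a - {x}\<close> and \<open>B1 \<in> C1\<close> contain \<open>b - {x}\<close>. Every edge of the top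
  chain \<open>y \<lessdot> z 1 \<lessdot> \<dots> \<lessdot> z l\<close> lies in \<open>A2\<close> or in \<open>B1\<close>, and a suitable \<open>S\<close> shows that
  it then lies in both. So \<open>A2\<close> contains \<open>y, z 1, \<dots>, z l\<close>, and for another \<open>S\<close> the
  sorting argument turns this into the count \<open>l < card a - 2\<close>. The bottom chain is the top
  chain of the dual order, and \<open>b\<close> is handled by exchanging \<open>a, C1\<close> with \<open>b, C2\<close>.
\<close>

lemma finite_total_has_greatest:
  fixes A :: "'a::order set"
  assumes "finite A" "A \<noteq> {}" "\<And>u v. u \<in> A \<Longrightarrow> v \<in> A \<Longrightarrow> u \<le> v \<or> v \<le> u"
  shows "\<exists>m\<in>A. \<forall>u\<in>A. u \<le> m"
  using finite_has_maximal[OF assms(1,2)] assms(3) by metis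

lemma finite_total_has_least:
  fixes A :: "'a::order set"
  assumes "finite A" "A \<noteq> {}" "\<And>u v. u \<in> A \<Longrightarrow> v \<in> A \<Longrightarrow> u \<le> v \<or> v \<le> u"
  shows "\<exists>m\<in>A. \<forall>u\<in>A. m \<le> u"
  using finite_has_minimal[OF assms(1,2)] assms(3) by metis

lemma sat_chain_subset: "sat_chain P c \<Longrightarrow> c \<subseteq> P"
  unfolding sat_chain_def by blast

lemma sat_chain_total: "sat_chain P c \<Longrightarrow> u \<in> c \<Longrightarrow> v \<in> c \<Longrightarrow> u \<le> v \<or> v \<le> u"
  unfolding sat_chain_def by blast

lemma sat_chain_covers:
  "sat_chain P c \<Longrightarrow> u \<in> c \<Longrightarrow> v \<in> c \<Longrightarrow> u < v \<Longrightarrow> \<not> (\<exists>h\<in>c. u < h \<and> h < v) \<Longrightarrow> covers P u v"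
  unfolding sat_chain_def by blast

lemma sat_chain_comparable_mem:
  fixes a :: "'a::order set"
  assumes a: "sat_chain P a" "finite a" and h: "h \<in> P" "x \<in> a" "y \<in> a" "x < h" "h < y"
    and comparable: "\<And>u. u \<in> a \<Longrightarrow> u \<le> h \<or> h \<le> u"
  shows "h \<in> a"
proof (rule ccontr)
  assume "h \<notin> a"
  then have below_or_above: "u < h \<or> h < u" if "u \<in> a" for u
    using comparable[OF that] that by (auto simp: less_le)
  have total: "\<And>u v. u \<in> a \<Longrightarrow> v \<in> a \<Longrightarrow> u \<le> v \<or> v \<le> u"
    using sat_chain_total[OF a(1)] by blast
  have "\<exists>lo\<in>{u\<in>a. u < h}. \<forall>u\<in>{u\<in>a. u < h}. u \<le> lo"
    by (rule finite_total_has_greatest) (use a(2) h(2,4) total in auto)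
  then obtain lo where lo: "lo \<in> a" "lo < h" "\<And>u. u \<in> a \<Longrightarrow> u < h \<Longrightarrow> u \<le> lo"
    by blast
  have "\<exists>hi\<in>{u\<in>a. h < u}. \<forall>u\<in>{u\<in>a. h < u}. hi \<le> u"
    by (rule finite_total_has_least) (use a(2) h(3,5) total in auto)
  then obtain hi where hi: "hi \<in> a" "h < hi" "\<And>u. u \<in> a \<Longrightarrow> h < u \<Longrightarrow> hi \<le> u"
    by blast
  have "\<not> (\<exists>u\<in>a. lo < u \<and> u < hi)"
    using below_or_above lo(3) hi(3) by (meson leD)
  then have "covers P lo hi"
    using sat_chain_covers[OF a(1) lo(1) hi(1)] lo(2) hi(2) by (meson order.strict_trans)
  then show False
    using h(1) lo(2) hi(2) unfolding covers_def by blast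
qed

lemma sat_chain_lower_cover:
  fixes a :: "'a::order set"
  assumes a: "sat_chain P a" "finite a" and "u \<in> a" "y \<in> a" "u < y"
  obtains g where "g \<in> a" "u \<le> g" "covers P g y"
proof -
  have "\<exists>g\<in>{h\<in>a. h < y}. \<forall>h\<in>{h\<in>a. h < y}. h \<le> g"
    by (rule finite_total_has_greatest) (use a assms(3,5) sat_chain_total in auto)
  then obtain g where g: "g \<in> a" "g < y" "\<And>h. h \<in> a \<Longrightarrow> h < y \<Longrightarrow> h \<le> g"
    by blast
  have "covers P g y"
    using sat_chain_covers[OF a(1) g(1) assms(4) g(2)] g(3) by (meson leD)
  then show thesis
    using that g assms(3,5) by blast
qed

lemma chain_cover_unique:
  "chain_cover P C \<Longrightarrow> c \<in> C \<Longrightarrow> d \<in> C \<Longrightarrow> v \<in> c \<Longrightarrow> v \<in> d \<Longrightarrow> c = d"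
  unfolding chain_cover_def by blast

lemma chain_cover_subset: "chain_cover P C \<Longrightarrow> c \<in> C \<Longrightarrow> c \<subseteq> P"
  unfolding chain_cover_def sat_chain_def by blast

lemma chain_cover_total:
  "chain_cover P C \<Longrightarrow> c \<in> C \<Longrightarrow> u \<in> c \<Longrightarrow> v \<in> c \<Longrightarrow> u \<le> v \<or> v \<le> u"
  unfolding chain_cover_def sat_chain_def by blast

lemma chain_cover_finite: "chain_cover P C \<Longrightarrow> c \<in> C \<Longrightarrow> finite P \<Longrightarrow> finite c"
  by (metis chain_cover_subset finite_subset)

lemma chain_cover_obtain:
  assumes "chain_cover P C" "v \<in> P"
  obtains c where "c \<in> C" "v \<in> c"
  using assms unfolding chain_cover_def by blast

lemma card_top_ranks:
  fixes d :: "'a::order set"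
  assumes fin: "finite d" and total: "\<And>u v. u \<in> d \<Longrightarrow> v \<in> d \<Longrightarrow> u \<le> v \<or> v \<le> u"
    and "n \<le> card d"
  shows "card {v\<in>d. card {h\<in>d. v \<le> h} \<le> n} = n"
proof -
  define r where "r v = card {h\<in>d. v \<le> h}" for v
  have r_less: "r v < r u" if "u < v" "u \<in> d" "v \<in> d" for u v
    unfolding r_def using that fin
    by (intro psubset_card_mono) (auto intro: order_trans simp: less_le_not_le)
  have inj: "inj_on r d"
  proof (rule inj_onI)
    fix u v assume "u \<in> d" "v \<in> d" "r u = r v"
    then show "u = v" using total[of u v] r_less[of u v] r_less[of v u] by (auto simp: le_less)
  qed
  moreover have "r ` d \<subseteq> {1..card d}"
    unfolding r_def using fin by (auto intro: card_mono simp: Suc_le_eq card_gt_0_iff)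
  ultimately have img: "r ` d = {1..card d}"
    using card_subset_eq[OF finite_atLeastAtMost] card_image by (metis card_atLeastAtMost diff_Suc_1)
  have "r ` {v\<in>d. r v \<le> n} = {1..n}"
  proof
    show "r ` {v\<in>d. r v \<le> n} \<subseteq> {1..n}" using img by auto
    show "{1..n} \<subseteq> r ` {v\<in>d. r v \<le> n}"
    proof
      fix m assume "m \<in> {1..n}"
      then have "m \<in> r ` d" using img assms(3) by simp
      then show "m \<in> r ` {v\<in>d. r v \<le> n}" using \<open>m \<in> {1..n}\<close> by auto
    qed
  qed
  moreover have "inj_on r {v\<in>d. r v \<le> n}"
    using inj by (rule inj_on_subset) blast
  ultimately have "bij_betw r {v\<in>d. r v \<le> n} {1..n}"
    by (intro bij_betw_imageI)
  then show ?thesis unfolding r_def by (simp add: bij_betw_same_card)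
qed

lemma ex_bij_betw_mapping_subset:
  assumes fin: "finite e" and same_card: "card (A \<inter> e) = card (B \<inter> e)"
  obtains \<sigma> where "bij_betw \<sigma> e e" "\<And>v. v \<in> e \<Longrightarrow> \<sigma> v \<in> B \<longleftrightarrow> v \<in> A"
proof -
  obtain f where f: "bij_betw f (A \<inter> e) (B \<inter> e)"
    using fin same_card finite_same_card_bij by (metis finite_Int)
  have "card (e - A) = card (e - B)"
    using fin same_card by (simp add: card_Diff_subset_Int Int_commute)
  then obtain g where g: "bij_betw g (e - A) (e - B)"
    using fin finite_same_card_bij by (metis finite_Diff)
  define \<sigma> where "\<sigma> v = (if v \<in> A then f v else g v)" for v
  have "bij_betw \<sigma> (A \<inter> e) (B \<inter> e)"
    by (rule bij_betw_cong[THEN iffD2, OF _ f]) (simp add: \<sigma>_def)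
  moreover have "bij_betw \<sigma> (e - A) (e - B)"
    by (rule bij_betw_cong[THEN iffD2, OF _ g]) (simp add: \<sigma>_def)
  ultimately have "bij_betw \<sigma> ((A \<inter> e) \<union> (e - A)) ((B \<inter> e) \<union> (e - B))"
    by (rule bij_betw_combine) blast
  moreover have "(A \<inter> e) \<union> (e - A) = e" "(B \<inter> e) \<union> (e - B) = e" by blast+
  moreover have "\<sigma> v \<in> B \<longleftrightarrow> v \<in> A" if "v \<in> e" for v
    using that f g unfolding \<sigma>_def bij_betw_def by auto
  ultimately show thesis using that by simp
qed

definition up_closed_along :: "'a::order set set \<Rightarrow> 'a set \<Rightarrow> bool" where
  "up_closed_along C S \<longleftrightarrow> (\<forall>c\<in>C. \<forall>u\<in>c. \<forall>v\<in>c. u \<le> v \<longrightarrow> u \<in> S \<longrightarrow> v \<in> S)"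

text \<open>On each chain \<open>d\<close> of \<open>C\<close>, the \<open>card (S \<inter> d)\<close> largest elements of \<open>d\<close>: the elements
  labelled 1 after \<open>C\<close>-sorting the 0/1-labeling of \<open>S\<close>.\<close>

definition top_segments :: "'a::order set set \<Rightarrow> 'a set \<Rightarrow> 'a set" where
  "top_segments C S = {v. \<exists>d\<in>C. v \<in> d \<and> card {h\<in>d. v \<le> h} \<le> card (S \<inter> d)}"

lemma top_segments_iff:
  assumes "chain_cover P C" "d \<in> C" "v \<in> d"
  shows "v \<in> top_segments C S \<longleftrightarrow> card {h\<in>d. v \<le> h} \<le> card (S \<inter> d)"
  using assms chain_cover_unique unfolding top_segments_def by blast

lemma csort_of_bool_top_segments:
  fixes P :: "'a::order set"
  assumes fin: "finite P" and cc: "chain_cover P C"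
  shows "csort C (\<lambda>v. of_bool (v \<in> S)) (\<lambda>v. of_bool (v \<in> top_segments C S))"
proof -
  let ?T = "top_segments C S"
  have "(\<exists>\<sigma>. bij_betw \<sigma> d d \<and> (\<forall>v\<in>d. (of_bool (v \<in> ?T) :: real) = of_bool (\<sigma> v \<in> S))) \<and>
        (\<forall>u\<in>d. \<forall>v\<in>d. u \<le> v \<longrightarrow> (of_bool (u \<in> ?T) :: real) \<le> of_bool (v \<in> ?T))"
    if d: "d \<in> C" for d
  proof
    have fin_d: "finite d" using chain_cover_finite[OF cc d fin] .
    have T_d: "?T \<inter> d = {v\<in>d. card {h\<in>d. v \<le> h} \<le> card (S \<inter> d)}"
      using top_segments_iff[OF cc d] by blast
    have "card (?T \<inter> d) = card (S \<inter> d)"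
      unfolding T_d using chain_cover_total[OF cc d] fin_d
      by (intro card_top_ranks) (auto intro: card_mono)
    then obtain \<sigma> where "bij_betw \<sigma> d d" "\<And>v. v \<in> d \<Longrightarrow> \<sigma> v \<in> S \<longleftrightarrow> v \<in> ?T"
      using ex_bij_betw_mapping_subset[OF fin_d] by metis
    then show "\<exists>\<sigma>. bij_betw \<sigma> d d \<and> (\<forall>v\<in>d. (of_bool (v \<in> ?T) :: real) = of_bool (\<sigma> v \<in> S))"
      by auto
    have "card {h\<in>d. v \<le> h} \<le> card {h\<in>d. u \<le> h}" if "u \<le> v" for u v
      using fin_d that by (intro card_mono) (auto intro: order_trans)
    then show "\<forall>u\<in>d. \<forall>v\<in>d. u \<le> v \<longrightarrow> (of_bool (u \<in> ?T) :: real) \<le> of_bool (v \<in> ?T)"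
      using top_segments_iff[OF cc d] by (auto intro: le_trans)
  qed
  then show ?thesis unfolding csort_def by blast
qed

lemma csort_of_bool_up_closed:
  assumes "up_closed_along C S"
  shows "csort C (\<lambda>v. of_bool (v \<in> S)) (\<lambda>v. of_bool (v \<in> S))"
  using assms unfolding csort_def up_closed_along_def by (auto intro: exI[of _ id])

lemma up_closed_along_top_segments:
  fixes P :: "'a::order set"
  assumes "finite P" "chain_cover P C2" "sort_compat C1 C2" "up_closed_along C1 S"
  shows "up_closed_along C1 (top_segments C2 S)"
proof -
  have "nondecr_along C1 (\<lambda>v. of_bool (v \<in> top_segments C2 S))"
    using assms(3) csort_of_bool_up_closed[OF assms(4)] csort_of_bool_top_segments[OF assms(1,2)]
    unfolding sort_compat_def by blast
  then show ?thesis
    unfolding nondecr_along_def up_closed_along_def by simp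
qed

lemma in_top_segments:
  fixes P :: "'a::order set"
  assumes "finite P" "chain_cover P C" "d \<in> C" "u \<in> d"
    and "g \<in> S \<inter> d" "\<not> u < g" "{h\<in>d. u < h} \<subseteq> S"
  shows "u \<in> top_segments C S"
proof -
  have fin: "finite {h\<in>d. u < h}" "finite d" using chain_cover_finite[OF assms(2,3,1)] by simp_all
  have "{h\<in>d. u \<le> h} = insert u {h\<in>d. u < h}"
    using assms(4) by (auto simp: le_less)
  then have "card {h\<in>d. u \<le> h} = card (insert g {h\<in>d. u < h})"
    using fin assms(6) by simp
  also have "\<dots> \<le> card (S \<inter> d)"
    using fin assms(5,7) by (intro card_mono) auto
  finally show ?thesis using top_segments_iff[OF assms(2-4)] by blast
qed

lemma notin_top_segments:
  fixes P :: "'a::order set"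
  assumes "finite P" "chain_cover P C" "d \<in> C" "v \<in> d" "S \<inter> d \<subseteq> {h\<in>d. v < h}"
  shows "v \<notin> top_segments C S"
proof -
  have fin: "finite d" using chain_cover_finite[OF assms(2,3,1)] .
  have "card (S \<inter> d) \<le> card {h\<in>d. v < h}"
    using fin assms(5) by (intro card_mono) auto
  also have "\<dots> < card {h\<in>d. v \<le> h}"
    using fin assms(4) by (intro psubset_card_mono) auto
  finally show ?thesis using top_segments_iff[OF assms(2-4)] by simp
qed

lemma cover_edge_in_chain:
  fixes P :: "'a::order set"
  assumes fin: "finite P" and cc1: "chain_cover P C1" and cc2: "chain_cover P C2"
    and sc: "sort_compat C1 C2"
    and c: "c \<in> C1" "g \<in> c" and d: "d \<in> C2" "g \<in> d" "u \<in> d" and "g < u"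
    and c': "c' \<in> C1" "u \<in> c'" "v \<in> c'" and uv: "covers P u v"
    and gap: "\<And>h. h \<in> c \<Longrightarrow> g < h \<Longrightarrow> h \<le> v \<Longrightarrow> False"
  shows "v \<in> d"
proof (rule ccontr)
  assume "v \<notin> d"
  define S where "S = {h\<in>c. g \<le> h} \<union> {h. \<exists>e\<in>d. u < e \<and> e \<le> h}"
  have "up_closed_along C1 S"
    unfolding up_closed_along_def S_def
    using chain_cover_unique[OF cc1 _ c(1)] by (blast intro: order_trans)
  then have up: "up_closed_along C1 (top_segments C2 S)"
    using up_closed_along_top_segments[OF fin cc2 sc] by blast
  have u_in: "u \<in> top_segments C2 S"
    using c d \<open>g < u\<close> by (intro in_top_segments[OF fin cc2 d(1,3), of g]) (auto simp: S_def)
  have "v \<in> P" using uv unfolding covers_def by blast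
  then obtain d' where d': "d' \<in> C2" "v \<in> d'" using chain_cover_obtain[OF cc2] by blast
  have "\<not> h \<le> v" if h: "h \<in> S" "h \<in> d'" for h
  proof
    assume "h \<le> v"
    from h(1) consider "h \<in> c" "g \<le> h" | e where "e \<in> d" "u < e" "e \<le> h"
      unfolding S_def by blast
    then show False
    proof cases
      case 1
      show False
      proof (cases "h = g")
        case True
        then have "d' = d" using chain_cover_unique[OF cc2 d'(1) d(1)] h(2) d(2) by blast
        then show False using \<open>v \<notin> d\<close> d'(2) by blast
      next
        case False
        then show False using gap[OF 1(1) _ \<open>h \<le> v\<close>] 1(2) by (simp add: less_le)
      qed
    next
      case (2 e)
      have "e \<in> P" using chain_cover_subset[OF cc2 d(1)] \<open>e \<in> d\<close> by blast
      moreover have "e < v"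
        using order_trans[OF \<open>e \<le> h\<close> \<open>h \<le> v\<close>] \<open>e \<in> d\<close> \<open>v \<notin> d\<close> by (auto simp: less_le)
      ultimately show False using uv \<open>u < e\<close> unfolding covers_def by blast
    qed
  qed
  then have "S \<inter> d' \<subseteq> {h\<in>d'. v < h}"
    using chain_cover_total[OF cc2 d'(1) d'(2)] by (fastforce simp: less_le)
  then have "v \<notin> top_segments C2 S"
    by (rule notin_top_segments[OF fin cc2 d'])
  moreover have "u \<le> v" using uv unfolding covers_def by (auto intro: less_imp_le)
  ultimately show False using up u_in c' unfolding up_closed_along_def by blast
qed

lemma in_N2_swap: "in_N2 P C1 C2 \<Longrightarrow> in_N2 P C2 C1"
  unfolding in_N2_def by (auto simp: Un_commute)

lemma diamond_swap: "diamond P Q a b x y \<Longrightarrow> diamond P Q b a x y"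
  unfolding diamond_def by auto

lemma covers_dual_iff: "covers (dual ` P) (dual u) (dual v) \<longleftrightarrow> covers P v u"
  unfolding covers_def by (auto simp: inj_image_mem_iff[OF inj_dual])

lemma sat_chain_dual:
  assumes "sat_chain P c"
  shows "sat_chain (dual ` P) (dual ` c)"
proof -
  have covers: "covers (dual ` P) u' v'"
    if mem: "u' \<in> dual ` c" "v' \<in> dual ` c"
      and gap: "u' < v'" "\<not> (\<exists>h\<in>dual ` c. u' < h \<and> h < v')" for u' v'
  proof -
    obtain u v where "u \<in> c" "v \<in> c" "u' = dual u" "v' = dual v" using mem by blast
    then have "covers P v u" using gap by (intro sat_chain_covers[OF assms]) auto
    then show ?thesis using \<open>u' = dual u\<close> \<open>v' = dual v\<close> by (simp add: covers_dual_iff)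
  qed
  show ?thesis
    unfolding sat_chain_def
  proof (intro conjI)
    show "dual ` c \<noteq> {}" "dual ` c \<subseteq> dual ` P" using assms unfolding sat_chain_def by auto
    show "\<forall>u\<in>dual ` c. \<forall>v\<in>dual ` c. u \<le> v \<or> v \<le> u" using sat_chain_total[OF assms] by auto
    show "\<forall>u\<in>dual ` c. \<forall>v\<in>dual ` c. u < v \<and> \<not> (\<exists>w\<in>dual ` c. u < w \<and> w < v) \<longrightarrow>
        covers (dual ` P) u v"
      using covers by blast
  qed
qed

lemma chain_cover_dual:
  assumes "chain_cover P C"
  shows "chain_cover (dual ` P) ((`) dual ` C)"
  unfolding chain_cover_def
proof (intro conjI)
  show "\<forall>c\<in>(`) dual ` C. sat_chain (dual ` P) c"
    using assms sat_chain_dual unfolding chain_cover_def by blast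
  show "\<Union> ((`) dual ` C) = dual ` P"
    using assms image_Union[of dual C] unfolding chain_cover_def by simp
  show "\<forall>c'\<in>(`) dual ` C. \<forall>d'\<in>(`) dual ` C. c' \<noteq> d' \<longrightarrow> c' \<inter> d' = {}"
  proof (intro ballI impI)
    fix c' d' assume "c' \<in> (`) dual ` C" "d' \<in> (`) dual ` C" "c' \<noteq> d'"
    then obtain c d where "c \<in> C" "d \<in> C" "c \<noteq> d" "c' = dual ` c" "d' = dual ` d" by blast
    then have "c \<inter> d = {}" using assms unfolding chain_cover_def by blast
    then show "c' \<inter> d' = {}"
      using \<open>c' = dual ` c\<close> \<open>d' = dual ` d\<close> by (simp add: image_Int[OF inj_dual, symmetric])
  qed
qed

lemma csort_dual:
  assumes "csort ((`) dual ` C) lam mu"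
  shows "csort C (\<lambda>v. - lam (dual v)) (\<lambda>v. - mu (dual v))"
  unfolding csort_def
proof (rule ballI, rule conjI)
  fix c assume "c \<in> C"
  then have "dual ` c \<in> (`) dual ` C" by (rule imageI)
  note sorted = bspec[OF assms[unfolded csort_def] this]
  obtain \<sigma> where "bij_betw \<sigma> (dual ` c) (dual ` c) \<and> (\<forall>v\<in>dual ` c. mu v = lam (\<sigma> v))"
    using conjunct1[OF sorted] ..
  then have \<sigma>: "bij_betw \<sigma> (dual ` c) (dual ` c)" "\<forall>v\<in>dual ` c. mu v = lam (\<sigma> v)"
    by blast+
  have mono: "\<forall>u\<in>dual ` c. \<forall>v\<in>dual ` c. u \<le> v \<longrightarrow> mu u \<le> mu v"
    using conjunct2[OF sorted] .
  have "bij_betw dual c (dual ` c)"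
    by (rule inj_on_imp_bij_betw) (simp add: inj_on_def)
  moreover have "bij_betw undual (dual ` c) c"
    by (rule bij_betw_imageI) (auto simp: inj_on_def image_image)
  ultimately have "bij_betw (undual \<circ> (\<sigma> \<circ> dual)) c c"
    by (rule bij_betw_trans[OF bij_betw_trans[OF _ \<sigma>(1)]])
  moreover have "- mu (dual v) = - lam (dual ((undual \<circ> (\<sigma> \<circ> dual)) v))" if "v \<in> c" for v
    using bspec[OF \<sigma>(2) imageI[OF that]] by simp
  ultimately show "\<exists>\<tau>. bij_betw \<tau> c c \<and> (\<forall>v\<in>c. - mu (dual v) = - lam (dual (\<tau> v)))"
    by blast
  show "\<forall>u\<in>c. \<forall>v\<in>c. u \<le> v \<longrightarrow> - mu (dual u) \<le> - mu (dual v)"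
  proof (intro ballI impI)
    fix u v assume "u \<in> c" "v \<in> c" "u \<le> v"
    then have "mu (dual v) \<le> mu (dual u)"
      using bspec[OF bspec[OF mono imageI[OF \<open>v \<in> c\<close>]] imageI[OF \<open>u \<in> c\<close>]] by simp
    then show "- mu (dual u) \<le> - mu (dual v)" by simp
  qed
qed

lemma nondecr_along_dual:
  assumes "nondecr_along C (\<lambda>v. - nu (dual v))"
  shows "nondecr_along ((`) dual ` C) nu"
  unfolding nondecr_along_def
proof (intro ballI impI)
  fix c' u' v' assume "c' \<in> (`) dual ` C" "u' \<in> c'" "v' \<in> c'" "u' \<le> v'"
  then obtain c u v where "c \<in> C" "u \<in> c" "v \<in> c" "u' = dual u" "v' = dual v" by blast
  moreover from this have "v \<le> u" using \<open>u' \<le> v'\<close> by simp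
  ultimately have "- nu (dual v) \<le> - nu (dual u)"
    using assms unfolding nondecr_along_def by blast
  then show "nu u' \<le> nu v'" using \<open>u' = dual u\<close> \<open>v' = dual v\<close> by simp
qed

lemma sort_compat_dual:
  assumes "sort_compat C1 C2"
  shows "sort_compat ((`) dual ` C1) ((`) dual ` C2)"
  unfolding sort_compat_def
proof (intro allI impI)
  fix lam mu nu assume "csort ((`) dual ` C1) lam mu" "csort ((`) dual ` C2) mu nu"
  then have "nondecr_along C1 (\<lambda>v. - nu (dual v))"
    using assms csort_dual unfolding sort_compat_def by blast
  then show "nondecr_along ((`) dual ` C1) nu" by (rule nondecr_along_dual)
qed

lemma in_N2_dual:
  assumes "in_N2 P C1 C2"
  shows "in_N2 (dual ` P) ((`) dual ` C1) ((`) dual ` C2)"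
proof -
  have "\<exists>c\<in>(`) dual ` C1 \<union> (`) dual ` C2. u \<in> c \<and> v \<in> c" if "covers (dual ` P) u v" for u v
  proof -
    from that have "covers P (undual v) (undual u)"
      using covers_dual_iff[of P "undual u" "undual v"] by simp
    then obtain c where "c \<in> C1 \<union> C2" "undual u \<in> c" "undual v \<in> c"
      using assms unfolding in_N2_def by blast
    moreover have "u = dual (undual u)" "v = dual (undual v)" by simp_all
    ultimately show ?thesis by blast
  qed
  then show ?thesis
    using assms unfolding in_N2_def by (simp add: chain_cover_dual sort_compat_dual)
qed

lemma convex_in_dual:
  assumes "convex_in P R"
  shows "convex_in (dual ` P) (dual ` R)"
  unfolding convex_in_def
proof (intro conjI ballI impI)
  show "dual ` R \<subseteq> dual ` P" using assms unfolding convex_in_def by blast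
  fix u' v' h' assume "u' \<in> dual ` R" "v' \<in> dual ` R" "h' \<in> dual ` P" "u' \<le> h' \<and> h' \<le> v'"
  then obtain u v h where "u \<in> R" "v \<in> R" "h \<in> P" "u' = dual u" "v' = dual v" "h' = dual h"
    by blast
  moreover from this have "v \<le> h" "h \<le> u" using \<open>u' \<le> h' \<and> h' \<le> v'\<close> by simp_all
  ultimately have "h \<in> R" using assms unfolding convex_in_def by blast
  then show "h' \<in> dual ` R" using \<open>h' = dual h\<close> by simp
qed

lemma diamond_dual:
  assumes "diamond P Q a b x y"
  shows "diamond (dual ` P) (dual ` Q) (dual ` a) (dual ` b) (dual y) (dual x)"
proof -
  have "dual ` a \<inter> dual ` b = {dual y, dual x}"
    using assms unfolding diamond_def by (auto simp: image_Int[OF inj_dual, symmetric])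
  then show ?thesis
    using assms unfolding diamond_def
    by (auto simp: convex_in_dual sat_chain_dual inj_image_eq_iff[OF inj_dual])
qed

lemma diamond_ext_above_below:
  assumes ext: "diamond_ext P Q a b x y k w l z"
    and "q \<in> Q" "h \<in> Q \<union> w ` {1..k} \<union> z ` {1..l}"
  shows "q \<le> h \<Longrightarrow> h \<in> Q \<union> z ` {1..l}" and "h \<le> q \<Longrightarrow> h \<in> Q \<union> w ` {1..k}"
proof -
  define G where "G = {(u, v). u \<in> Q \<and> v \<in> Q \<and> u \<le> v}
    \<union> {(w (Suc i), w i) | i. 1 \<le> i \<and> i < k} \<union> {(w 1, x), (y, z 1)}
    \<union> {(z i, z (Suc i)) | i. 1 \<le> i \<and> i < l}"
  have order: "u \<le> v \<longleftrightarrow> (u, v) \<in> G\<^sup>*"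
    if "u \<in> Q \<union> w ` {1..k} \<union> z ` {1..l}" "v \<in> Q \<union> w ` {1..k} \<union> z ` {1..l}" for u v
    using ext that unfolding diamond_ext_def G_def Let_def by blast
  have "x \<in> Q" "y \<in> Q" "1 \<le> k" "1 \<le> l"
    and disjoint: "w ` {1..k} \<inter> Q = {}" "z ` {1..l} \<inter> Q = {}" "w ` {1..k} \<inter> z ` {1..l} = {}"
    using ext unfolding diamond_ext_def diamond_def by auto
  have w_out: "w i \<notin> Q \<and> (\<forall>j\<in>{1..l}. w i \<noteq> z j \<and> z j \<noteq> w i)" if "i \<in> {1..k}" for i
    using disjoint that by blast
  have z_out: "z i \<notin> Q \<and> (\<forall>j\<in>{1..k}. w j \<noteq> z i \<and> z i \<noteq> w j)" if "i \<in> {1..l}" for i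
    using disjoint that by blast
  have "G `` (Q \<union> z ` {1..l}) \<subseteq> Q \<union> z ` {1..l}"
    unfolding G_def using w_out \<open>x \<in> Q\<close> \<open>1 \<le> k\<close> \<open>1 \<le> l\<close> by auto
  moreover have "G\<inverse> `` (Q \<union> w ` {1..k}) \<subseteq> Q \<union> w ` {1..k}"
    unfolding G_def using z_out \<open>y \<in> Q\<close> \<open>1 \<le> k\<close> \<open>1 \<le> l\<close> by auto
  ultimately have "G\<^sup>* `` (Q \<union> z ` {1..l}) = Q \<union> z ` {1..l}"
    and "(G\<^sup>*)\<inverse> `` (Q \<union> w ` {1..k}) = Q \<union> w ` {1..k}"
    by (auto simp: Image_closed_trancl rtrancl_converse[symmetric])
  then show "q \<le> h \<Longrightarrow> h \<in> Q \<union> z ` {1..l}" and "h \<le> q \<Longrightarrow> h \<in> Q \<union> w ` {1..k}"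
    using order[of q h] order[of h q] assms(2,3) by blast+
qed

locale typeI_diamond =
  fixes P :: "'a::order set" and C1 C2 :: "'a set set" and Q a b :: "'a set" and x y :: 'a
    and k :: nat and w :: "nat \<Rightarrow> 'a" and l :: nat and z :: "nat \<Rightarrow> 'a"
    and A1 A2 B1 B2 :: "'a set"
  assumes N2: "in_N2 P C1 C2"
    and diamond: "diamond P Q a b x y"
    and k_pos: "1 \<le> k"
    and covers_w: "\<And>i. 1 \<le> i \<Longrightarrow> i < k \<Longrightarrow> covers P (w (Suc i)) (w i)"
    and covers_w1: "covers P (w 1) x"
    and l_pos: "1 \<le> l"
    and covers_z: "\<And>i. 1 \<le> i \<Longrightarrow> i < l \<Longrightarrow> covers P (z i) (z (Suc i))"
    and covers_z1: "covers P y (z 1)"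
    and convex_ext: "convex_in P (Q \<union> w ` {1..k} \<union> z ` {1..l})"
    and above_Q: "\<And>q h. q \<in> Q \<Longrightarrow> h \<in> Q \<union> w ` {1..k} \<union> z ` {1..l} \<Longrightarrow> q \<le> h \<Longrightarrow>
      h \<in> Q \<union> z ` {1..l}"
    and below_Q: "\<And>q h. q \<in> Q \<Longrightarrow> h \<in> Q \<union> w ` {1..k} \<union> z ` {1..l} \<Longrightarrow> h \<le> q \<Longrightarrow>
      h \<in> Q \<union> w ` {1..k}"
    and A1: "A1 \<in> C1" "a - {y} \<subseteq> A1" and A2: "A2 \<in> C2" "a - {x} \<subseteq> A2"
    and B1: "B1 \<in> C1" "b - {x} \<subseteq> B1" and B2: "B2 \<in> C2" "b - {y} \<subseteq> B2"

lemma typeI_diamond_if_diamond_ext: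
  assumes "in_N2 P C1 C2" "diamond_ext P Q a b x y k w l z"
    and "A1 \<in> C1" "a - {y} \<subseteq> A1" "A2 \<in> C2" "a - {x} \<subseteq> A2"
    and "B1 \<in> C1" "b - {x} \<subseteq> B1" "B2 \<in> C2" "b - {y} \<subseteq> B2"
  shows "typeI_diamond P C1 C2 Q a b x y k w l z A1 A2 B1 B2"
proof -
  have "diamond P Q a b x y \<and> 1 \<le> k \<and> 1 \<le> l \<and> convex_in P (Q \<union> w ` {1..k} \<union> z ` {1..l}) \<and>
      (\<forall>i. 1 \<le> i \<and> i < k \<longrightarrow> covers P (w (Suc i)) (w i)) \<and> covers P (w 1) x \<and>
      (\<forall>i. 1 \<le> i \<and> i < l \<longrightarrow> covers P (z i) (z (Suc i))) \<and> covers P y (z 1)"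
    using assms(2) unfolding diamond_ext_def by (elim conjE) (intro conjI; assumption)
  then show ?thesis
    using assms(1,3-) diamond_ext_above_below[OF assms(2)] unfolding typeI_diamond_def by auto
qed

context typeI_diamond
begin

lemma finite_P: "finite P" and cc1: "chain_cover P C1" and cc2: "chain_cover P C2"
  and sc12: "sort_compat C1 C2"
  and edge_in_chain: "\<And>u v. covers P u v \<Longrightarrow> \<exists>c\<in>C1 \<union> C2. u \<in> c \<and> v \<in> c"
  using N2 unfolding in_N2_def by auto

lemma Q_eq: "Q = a \<union> b" and sat_a: "sat_chain P a" and sat_b: "sat_chain P b"
  and a_ne_b: "a \<noteq> b" and a_Int_b: "a \<inter> b = {x, y}"
  and x_a: "x \<in> a" and x_b: "x \<in> b" and y_a: "y \<in> a" and y_b: "y \<in> b"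
  and x_le: "\<And>u. u \<in> Q \<Longrightarrow> x \<le> u" and le_y: "\<And>u. u \<in> Q \<Longrightarrow> u \<le> y"
  using diamond unfolding diamond_def by auto

lemma Q_convex: "convex_in P Q"
  using diamond unfolding diamond_def by blast

lemma finite_a: "finite a"
  using sat_chain_subset[OF sat_a] finite_P by (rule finite_subset)

lemma swap_typeI_diamond: "typeI_diamond P C2 C1 Q b a x y k w l z B2 B1 A2 A1"
  using in_N2_swap[OF N2] diamond_swap[OF diamond] k_pos covers_w covers_w1 l_pos covers_z covers_z1
    convex_ext above_Q below_Q B2 B1 A2 A1
  by (rule typeI_diamond.intro)

lemma dual_typeI_diamond:
  "typeI_diamond (dual ` P) ((`) dual ` C2) ((`) dual ` C1) (dual ` Q) (dual ` a) (dual ` b)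
     (dual y) (dual x) l (dual \<circ> z) k (dual \<circ> w) (dual ` A2) (dual ` A1) (dual ` B2) (dual ` B1)"
proof (rule typeI_diamond.intro)
  have ext_dual: "dual ` Q \<union> (dual \<circ> z) ` {1..l} \<union> (dual \<circ> w) ` {1..k} =
      dual ` (Q \<union> w ` {1..k} \<union> z ` {1..l})"
    by (auto simp: image_Un image_comp)
  show "in_N2 (dual ` P) ((`) dual ` C2) ((`) dual ` C1)"
    using in_N2_dual[OF in_N2_swap[OF N2]] .
  show "diamond (dual ` P) (dual ` Q) (dual ` a) (dual ` b) (dual y) (dual x)"
    using diamond_dual[OF diamond] .
  show "1 \<le> l" "1 \<le> k" using l_pos k_pos .
  show "covers (dual ` P) ((dual \<circ> z) (Suc i)) ((dual \<circ> z) i)" if "1 \<le> i" "i < l" for i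
    using covers_z[OF that] by (simp add: covers_dual_iff)
  show "covers (dual ` P) ((dual \<circ> z) 1) (dual y)"
    using covers_z1 by (simp add: covers_dual_iff)
  show "covers (dual ` P) ((dual \<circ> w) i) ((dual \<circ> w) (Suc i))" if "1 \<le> i" "i < k" for i
    using covers_w[OF that] by (simp add: covers_dual_iff)
  show "covers (dual ` P) (dual x) ((dual \<circ> w) 1)"
    using covers_w1 by (simp add: covers_dual_iff)
  show "convex_in (dual ` P) (dual ` Q \<union> (dual \<circ> z) ` {1..l} \<union> (dual \<circ> w) ` {1..k})"
    unfolding ext_dual using convex_in_dual[OF convex_ext] .
  show "h' \<in> dual ` Q \<union> (dual \<circ> w) ` {1..k}"
    if mem: "q' \<in> dual ` Q" "h' \<in> dual ` Q \<union> (dual \<circ> z) ` {1..l} \<union> (dual \<circ> w) ` {1..k}"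
      and "q' \<le> h'" for q' h'
  proof -
    obtain q h where "q \<in> Q" "h \<in> Q \<union> w ` {1..k} \<union> z ` {1..l}" "q' = dual q" "h' = dual h"
      using mem unfolding ext_dual by blast
    moreover from this have "h \<le> q" using \<open>q' \<le> h'\<close> by simp
    ultimately have "h \<in> Q \<union> w ` {1..k}" using below_Q by blast
    then show ?thesis using \<open>h' = dual h\<close> by (auto simp: image_comp[symmetric])
  qed
  show "h' \<in> dual ` Q \<union> (dual \<circ> z) ` {1..l}"
    if mem: "q' \<in> dual ` Q" "h' \<in> dual ` Q \<union> (dual \<circ> z) ` {1..l} \<union> (dual \<circ> w) ` {1..k}"
      and "h' \<le> q'" for q' h'
  proof -
    obtain q h where "q \<in> Q" "h \<in> Q \<union> w ` {1..k} \<union> z ` {1..l}" "q' = dual q" "h' = dual h"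
      using mem unfolding ext_dual by blast
    moreover from this have "q \<le> h" using \<open>h' \<le> q'\<close> by simp
    ultimately have "h \<in> Q \<union> z ` {1..l}" using above_Q by blast
    then show ?thesis using \<open>h' = dual h\<close> by (auto simp: image_comp[symmetric])
  qed
  show "dual ` A2 \<in> (`) dual ` C2" "dual ` A1 \<in> (`) dual ` C1"
    "dual ` B2 \<in> (`) dual ` C2" "dual ` B1 \<in> (`) dual ` C1"
    using A1(1) A2(1) B1(1) B2(1) by simp_all
  show "dual ` a - {dual x} \<subseteq> dual ` A2" "dual ` a - {dual y} \<subseteq> dual ` A1"
    "dual ` b - {dual y} \<subseteq> dual ` B2" "dual ` b - {dual x} \<subseteq> dual ` B1"
    using A1(2) A2(2) B1(2) B2(2) by auto
qed

lemma x_less_y: "x < y"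
proof -
  have "x \<noteq> y"
  proof
    assume "x = y"
    then have "a = {x}" "b = {x}"
      using x_le le_y x_a x_b Q_eq by (auto intro: order.antisym)
    then show False using a_ne_b by simp
  qed
  then show ?thesis using le_y x_a Q_eq by (simp add: less_le)
qed

lemma a_inner:
  obtains h where "h \<in> a" "x < h" "h < y"
proof (cases "a = {x, y}")
  case True
  then have "covers P x y"
    using sat_chain_covers[OF sat_a x_a y_a x_less_y] by auto
  moreover have "b \<noteq> {x, y}" using True a_ne_b by simp
  then obtain h where "h \<in> b" "h \<noteq> x" "h \<noteq> y" using x_b y_b by blast
  moreover have "h \<in> P" using sat_chain_subset[OF sat_b] \<open>h \<in> b\<close> by blast
  ultimately show thesis
    using x_le[of h] le_y[of h] Q_eq unfolding covers_def by (auto simp: less_le)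
next
  case False
  then obtain h where "h \<in> a" "h \<noteq> x" "h \<noteq> y" using x_a y_a by blast
  then show thesis using that x_le[of h] le_y[of h] Q_eq by (auto simp: less_le)
qed

lemma lower_cover_of_y:
  obtains g where "g \<in> a" "x < g" "covers P g y"
proof -
  obtain h where "h \<in> a" "x < h" "h < y" using a_inner .
  then obtain g where "g \<in> a" "h \<le> g" "covers P g y"
    using sat_chain_lower_cover[OF sat_a finite_a _ y_a] by blast
  then show thesis using that \<open>x < h\<close> by (meson less_le_trans)
qed

lemma A1_B1_disjoint: "A1 \<inter> B1 = {}"
proof -
  have "A1 \<noteq> B1"
  proof
    assume same: "A1 = B1"
    obtain h where h: "h \<in> b" "x < h" "h < y"
      using typeI_diamond.a_inner[OF swap_typeI_diamond] .
    have ab: "a \<union> b \<subseteq> A1"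
      using A1 B1 same x_less_y x_a y_b by auto
    have "h \<in> a"
    proof (rule sat_chain_comparable_mem[OF sat_a finite_a _ x_a y_a h(2,3)])
      show "h \<in> P" using sat_chain_subset[OF sat_b] h(1) by blast
      show "u \<le> h \<or> h \<le> u" if "u \<in> a" for u
        using chain_cover_total[OF cc1 A1(1)] ab that h(1) by blast
    qed
    then show False using h a_Int_b by auto
  qed
  then show ?thesis using cc1 A1(1) B1(1) unfolding chain_cover_def by blast
qed

lemma A2_B2_disjoint: "A2 \<inter> B2 = {}"
  using typeI_diamond.A1_B1_disjoint[OF swap_typeI_diamond] by blast

lemma x_A1: "x \<in> A1" and x_B2: "x \<in> B2" and y_A2: "y \<in> A2" and y_B1: "y \<in> B1"
  using A1 A2 B1 B2 x_a x_b y_a y_b x_less_y by auto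

definition top_chain :: "nat \<Rightarrow> 'a" where
  "top_chain i = (if i = 0 then y else z i)"

lemma z_image_eq: "z ` {1..l} = top_chain ` {1..l}"
  by (rule image_cong) (auto simp: top_chain_def)

lemma covers_top_chain: "i < l \<Longrightarrow> covers P (top_chain i) (top_chain (Suc i))"
  using covers_z covers_z1 by (cases i) (auto simp: top_chain_def)

lemma top_chain_less: "i < j \<Longrightarrow> j \<le> l \<Longrightarrow> top_chain i < top_chain j"
proof (induction j)
  case 0 then show ?case by simp
next
  case (Suc j)
  have "top_chain j < top_chain (Suc j)"
    using covers_top_chain[of j] Suc.prems unfolding covers_def by simp
  then show ?case using Suc by (cases "i = j") (auto intro: order.strict_trans)
qed

lemma inj_on_top_chain: "inj_on top_chain {0..l}"
proof (rule inj_onI)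
  fix i j assume "i \<in> {0..l}" "j \<in> {0..l}" "top_chain i = top_chain j"
  then show "i = j"
    using top_chain_less[of i j] top_chain_less[of j i] by (cases i j rule: linorder_cases) auto
qed

lemma top_chain_mem: "i \<le> l \<Longrightarrow> top_chain i \<in> Q \<union> w ` {1..k} \<union> z ` {1..l}"
  using y_a Q_eq by (auto simp: top_chain_def)

lemma above_Q_below_top_chain:
  assumes "q \<in> Q" "h \<in> P" "q \<le> h" "j \<le> l" "h \<le> top_chain j"
  shows "h \<in> Q \<or> (\<exists>i\<in>{1..j}. h = top_chain i)"
proof -
  have "h \<in> Q \<union> w ` {1..k} \<union> z ` {1..l}"
    using convex_ext assms top_chain_mem[OF assms(4)] unfolding convex_in_def by blast
  then have "h \<in> Q \<or> h \<in> top_chain ` {1..l}"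
    using above_Q[OF assms(1) _ assms(3)] z_image_eq by blast
  moreover have "i \<le> j" if "i \<in> {1..l}" "h = top_chain i" for i
    using top_chain_less[of j i] that assms(5) by (meson atLeastAtMost_iff leD not_le)
  ultimately show ?thesis by auto
qed

lemma above_lower_cover_of_y:
  assumes "g \<in> Q" "covers P g y" "h \<in> P" "g < h" "j \<le> l" "h \<le> top_chain j"
  obtains i where "i \<le> j" "h = top_chain i"
proof -
  have "h \<in> Q \<or> (\<exists>i\<in>{1..j}. h = top_chain i)"
    using above_Q_below_top_chain assms less_imp_le by blast
  moreover have "h = y" if "h \<in> Q"
    using le_y[OF that] assms(2-4) unfolding covers_def by (auto simp: less_le)
  ultimately show thesis
    using that[of 0] that by (auto simp: top_chain_def)
qed

lemma top_chain_Suc_mem_A2: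
  assumes "i < l" and in_B1: "\<And>j. j \<le> Suc i \<Longrightarrow> top_chain j \<in> B1" and "top_chain i \<in> A2"
  shows "top_chain (Suc i) \<in> A2"
proof -
  obtain g where g: "g \<in> a" "x < g" "covers P g y" using lower_cover_of_y .
  have "g < y" using g(3) unfolding covers_def by blast
  then have g_A: "g \<in> A1" "g \<in> A2" using g(1,2) A1(2) A2(2) by auto
  have "g < top_chain i"
    using \<open>g < y\<close> top_chain_less[of 0 i] \<open>i < l\<close> by (cases i) (auto simp: top_chain_def)
  show ?thesis
  proof (rule cover_edge_in_chain[OF finite_P cc1 cc2 sc12 A1(1) g_A(1) A2(1) g_A(2) assms(3)
        \<open>g < top_chain i\<close> B1(1) _ _ covers_top_chain[OF \<open>i < l\<close>]])
    show "top_chain i \<in> B1" "top_chain (Suc i) \<in> B1" using in_B1 by auto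
    fix h assume h: "h \<in> A1" "g < h" "h \<le> top_chain (Suc i)"
    have "h \<in> P" using chain_cover_subset[OF cc1 A1(1)] h(1) by blast
    then obtain j where "j \<le> Suc i" "h = top_chain j"
      using above_lower_cover_of_y[OF _ g(3) _ h(2) _ h(3)] g(1) Q_eq \<open>i < l\<close> by auto
    then show False using in_B1 h(1) A1_B1_disjoint by blast
  qed
qed

lemma top_chain_in_A2_B1: "j \<le> l \<Longrightarrow> top_chain j \<in> A2 \<inter> B1"
proof (induction j rule: less_induct)
  case (less j)
  show ?case
  proof (cases j)
    case 0
    then show ?thesis using y_A2 y_B1 by (simp add: top_chain_def)
  next
    case (Suc i)
    have below: "top_chain j' \<in> A2 \<inter> B1" if "j' \<le> i" for j'
      using less Suc that by simp
    have "i < l" using less.prems Suc by simp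
    then obtain c where "c \<in> C1 \<union> C2" "top_chain i \<in> c" "top_chain (Suc i) \<in> c"
      using edge_in_chain[OF covers_top_chain] by blast
    then have "top_chain (Suc i) \<in> B1 \<or> top_chain (Suc i) \<in> A2"
      using below[of i] chain_cover_unique[OF cc1 _ B1(1)] chain_cover_unique[OF cc2 _ A2(1)] by blast
    then show ?thesis
      using top_chain_Suc_mem_A2[OF \<open>i < l\<close>] typeI_diamond.top_chain_Suc_mem_A2[OF swap_typeI_diamond \<open>i < l\<close>]
        below Suc by (auto simp: le_Suc_eq)
  qed
qed

lemma top_chain_subset: "z ` {1..l} \<subseteq> A2 \<inter> B1"
  using top_chain_in_A2_B1 z_image_eq by auto

lemma card_top_chain: "card (z ` {1..l}) = l"
proof -
  have "inj_on top_chain {1..l}" using inj_on_top_chain by (rule inj_on_subset) auto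
  then show ?thesis using z_image_eq by (simp add: card_image)
qed

text \<open>The labeling of \<open>upper_region\<close> is \<open>C1\<close>-sorted. After \<open>C2\<close>-sorting, the lower cover
  \<open>g\<close> of \<open>y\<close> in \<open>b\<close> is still labelled 1 (on \<open>B2\<close> the set contains \<open>x\<close> and all elements
  above \<open>g\<close>), but \<open>y\<close> is labelled 0 as soon as \<open>card a - 2 \<le> l\<close> (on \<open>A2\<close> the set has
  fewer elements than there are from \<open>y\<close> upward). This contradicts \<open>g \<le> y\<close> on \<open>B1\<close>.\<close>

definition upper_region :: "'a set" where
  "upper_region = {h\<in>A1. x \<le> h} \<union> {h\<in>P. \<not> h \<le> top_chain l}"

lemma up_closed_upper_region: "up_closed_along C1 upper_region"
  unfolding up_closed_along_def upper_region_def
  using chain_cover_unique[OF cc1 _ A1(1)] chain_cover_subset[OF cc1] by (blast intro: order_trans)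

lemma lower_cover_in_top_segments:
  assumes "g \<in> b" "x < g" "covers P g y"
  shows "g \<in> top_segments C2 upper_region"
proof -
  have "g \<in> B2" using assms B2(2) unfolding covers_def by auto
  have "h \<in> upper_region" if h: "h \<in> B2" "g < h" for h
  proof -
    have "h \<in> P" using chain_cover_subset[OF cc2 B2(1)] h(1) by blast
    moreover have "\<not> h \<le> top_chain l"
    proof
      assume "h \<le> top_chain l"
      then obtain i where "i \<le> l" "h = top_chain i"
        using above_lower_cover_of_y[OF _ assms(3) \<open>h \<in> P\<close> h(2)] assms(1) Q_eq by auto
      then show False using top_chain_in_A2_B1 h(1) A2_B2_disjoint by blast
    qed
    ultimately show ?thesis unfolding upper_region_def by blast
  qed
  then show ?thesis
    using x_A1 x_B2 assms(2)
    by (intro in_top_segments[OF finite_P cc2 B2(1) \<open>g \<in> B2\<close>, of x]) (auto simp: upper_region_def)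
qed

lemma upper_region_Int_A2: "upper_region \<inter> A2 \<subseteq> (a - {x, y}) \<union> {h\<in>A2. top_chain l < h}"
proof
  fix h assume h: "h \<in> upper_region \<inter> A2"
  have "h \<in> P" using chain_cover_subset[OF cc2 A2(1)] h by blast
  have total: "u \<in> A2 \<Longrightarrow> h \<le> u \<or> u \<le> h" for u
    using chain_cover_total[OF cc2 A2(1)] h by blast
  show "h \<in> (a - {x, y}) \<union> {h\<in>A2. top_chain l < h}"
  proof (cases "h \<le> top_chain l")
    case False
    then show ?thesis using h total[of "top_chain l"] top_chain_in_A2_B1[of l] by (auto simp: less_le)
  next
    case True
    then have "h \<in> A1" "x \<le> h" using h unfolding upper_region_def by auto
    have "h \<le> y"
    proof (rule ccontr)
      assume "\<not> h \<le> y"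
      then have "y \<le> h" using total y_A2 by blast
      moreover have "y \<in> Q" using y_a Q_eq by blast
      ultimately have "h \<in> Q \<or> (\<exists>i\<in>{1..l}. h = top_chain i)"
        using above_Q_below_top_chain[OF _ \<open>h \<in> P\<close> _ order_refl True] by blast
      then have "\<exists>i\<in>{1..l}. h = top_chain i" using le_y \<open>\<not> h \<le> y\<close> by blast
      then show False using top_chain_in_A2_B1 \<open>h \<in> A1\<close> A1_B1_disjoint by fastforce
    qed
    then have "h \<in> a \<union> b"
      using Q_convex \<open>h \<in> P\<close> \<open>x \<le> h\<close> x_a y_a Q_eq unfolding convex_in_def by blast
    moreover have "h \<notin> b - {x}" "h \<noteq> y" using \<open>h \<in> A1\<close> B1(2) y_B1 A1_B1_disjoint by auto
    moreover have "h \<noteq> x" using h x_B2 A2_B2_disjoint by auto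
    ultimately show ?thesis by auto
  qed
qed

lemma y_notin_top_segments:
  assumes "card a - 2 \<le> l"
  shows "y \<notin> top_segments C2 upper_region"
proof -
  define U where "U = {h\<in>A2. top_chain l < h}"
  have fin_A2: "finite A2" using chain_cover_finite[OF cc2 A2(1) finite_P] .
  have fin_U: "finite U" unfolding U_def using fin_A2 by simp
  have "card (a - {x, y}) = card a - card {x, y}"
    using x_a y_a by (intro card_Diff_subset) auto
  moreover have "card {x, y} = 2" using less_imp_neq[OF x_less_y] by simp
  ultimately have card_a: "card (a - {x, y}) = card a - 2" by simp
  have below_top: "top_chain i \<le> top_chain l" if "i \<le> l" for i
    using top_chain_less[of i l] that by (cases "i = l") (auto intro: less_imp_le)
  have above_y: "y \<le> top_chain i" if "i \<le> l" for i
    using top_chain_less[of 0 i] that by (cases i) (auto simp: top_chain_def intro: less_imp_le)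
  have "top_chain i \<notin> U" if "i \<le> l" for i
    using leD[OF below_top[OF that]] unfolding U_def by simp
  then have disjoint: "top_chain ` {0..l} \<inter> U = {}" by auto
  have "card (upper_region \<inter> A2) \<le> card ((a - {x, y}) \<union> U)"
    using upper_region_Int_A2 finite_a fin_U unfolding U_def by (intro card_mono) auto
  also have "\<dots> \<le> card (a - {x, y}) + card U" by (rule card_Un_le)
  also have "\<dots> < Suc l + card U" using card_a assms by simp
  also have "\<dots> = card (top_chain ` {0..l}) + card U"
    using card_image[OF inj_on_top_chain] by simp
  also have "\<dots> = card (top_chain ` {0..l} \<union> U)"
    using disjoint fin_U by (simp add: card_Un_disjoint)
  also have "\<dots> \<le> card {h\<in>A2. y \<le> h}"
  proof (rule card_mono)
    show "finite {h\<in>A2. y \<le> h}" using fin_A2 by simp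
    have "h \<in> A2" "y \<le> h" if "h \<in> U" for h
      using that order_trans[OF above_y[OF order_refl] less_imp_le] unfolding U_def by auto
    then show "top_chain ` {0..l} \<union> U \<subseteq> {h\<in>A2. y \<le> h}"
      using top_chain_in_A2_B1 above_y by auto
  qed
  finally show ?thesis using top_segments_iff[OF cc2 A2(1) y_A2] by simp
qed

lemma top_chain_length_less: "l < card a - 2"
proof (rule ccontr)
  assume "\<not> l < card a - 2"
  obtain g where g: "g \<in> b" "x < g" "covers P g y"
    using typeI_diamond.lower_cover_of_y[OF swap_typeI_diamond] .
  have "g \<in> B1" "g \<le> y" using g B1(2) unfolding covers_def by auto
  have "up_closed_along C1 (top_segments C2 upper_region)"
    using up_closed_along_top_segments[OF finite_P cc2 sc12 up_closed_upper_region] .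
  then show False
    using lower_cover_in_top_segments[OF g] y_notin_top_segments \<open>\<not> l < card a - 2\<close>
      B1(1) \<open>g \<in> B1\<close> y_B1 \<open>g \<le> y\<close> unfolding up_closed_along_def by force
qed

lemma bottom_chain_subset: "w ` {1..k} \<subseteq> A1 \<inter> B2"
proof -
  have "dual ` w ` {1..k} \<subseteq> dual ` (A1 \<inter> B2)"
    using typeI_diamond.top_chain_subset[OF dual_typeI_diamond]
    by (simp add: image_comp image_Int[OF inj_dual])
  then show ?thesis by (simp add: inj_image_subset_iff[OF inj_dual])
qed

lemma card_bottom_chain: "card (w ` {1..k}) = k"
proof -
  have "card (dual ` w ` {1..k}) = card (w ` {1..k})"
    by (rule card_image) (simp add: inj_on_def)
  then show ?thesis
    using typeI_diamond.card_top_chain[OF dual_typeI_diamond] by (simp add: image_comp)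
qed

lemma bottom_chain_length_less: "k < card a - 2"
proof -
  have "card (dual ` a) = card a"
    by (rule card_image) (simp add: inj_on_def)
  then show ?thesis
    using typeI_diamond.top_chain_length_less[OF dual_typeI_diamond] by simp
qed

end

lemma typeI_ord_extends_to_chains:
  assumes "in_N2 P C1 C2" "diamond_ext P Q a b x y k w l z" "typeI_ord C1 C2 a b x y"
  shows "(\<exists>c\<in>C1. (w ` {1..k} \<union> a) - {y} \<subseteq> c) \<and> (\<exists>c\<in>C2. (w ` {1..k} \<union> b) - {y} \<subseteq> c) \<and>
         (\<exists>c\<in>C2. (a \<union> z ` {1..l}) - {x} \<subseteq> c) \<and> (\<exists>c\<in>C1. (b \<union> z ` {1..l}) - {x} \<subseteq> c)"
    and "max (card (w ` {1..k})) (card (z ` {1..l})) < min (card a - 2) (card b - 2)"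
proof -
  obtain A1 A2 B1 B2 where chains: "A1 \<in> C1" "a - {y} \<subseteq> A1" "A2 \<in> C2" "a - {x} \<subseteq> A2"
    "B1 \<in> C1" "b - {x} \<subseteq> B1" "B2 \<in> C2" "b - {y} \<subseteq> B2"
    using assms(3) unfolding typeI_ord_def by blast
  have "typeI_diamond P C1 C2 Q a b x y k w l z A1 A2 B1 B2"
    using typeI_diamond_if_diamond_ext[OF assms(1,2) chains] .
  then interpret typeI_diamond P C1 C2 Q a b x y k w l z A1 A2 B1 B2 .
  interpret swapped: typeI_diamond P C2 C1 Q b a x y k w l z B2 B1 A2 A1
    by (rule swap_typeI_diamond)
  have "(w ` {1..k} \<union> a) - {y} \<subseteq> A1" "(w ` {1..k} \<union> b) - {y} \<subseteq> B2"
    "(a \<union> z ` {1..l}) - {x} \<subseteq> A2" "(b \<union> z ` {1..l}) - {x} \<subseteq> B1"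
    using chains(2,4,6,8) top_chain_subset bottom_chain_subset by blast+
  then show "(\<exists>c\<in>C1. (w ` {1..k} \<union> a) - {y} \<subseteq> c) \<and> (\<exists>c\<in>C2. (w ` {1..k} \<union> b) - {y} \<subseteq> c) \<and>
        (\<exists>c\<in>C2. (a \<union> z ` {1..l}) - {x} \<subseteq> c) \<and> (\<exists>c\<in>C1. (b \<union> z ` {1..l}) - {x} \<subseteq> c)"
    using chains(1,3,5,7) by blast
  show "max (card (w ` {1..k})) (card (z ` {1..l})) < min (card a - 2) (card b - 2)"
    using card_top_chain card_bottom_chain top_chain_length_less bottom_chain_length_less
      swapped.top_chain_length_less swapped.bottom_chain_length_less by simp
qed

theorem lemma2p8:
  fixes P :: "'a::order set" and C1 C2 :: "'a set set" and Q a b :: "'a set"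
    and x y :: 'a and k l :: nat and w z :: "nat \<Rightarrow> 'a"
  assumes "in_N2 P C1 C2"
    and "diamond_ext P Q a b x y k w l z"
    and "typeI C1 C2 a b x y"
  shows "(let Cs = w ` {1..k}; Ds = z ` {1..l};
              concl = (\<lambda>C1 C2. (\<exists>c\<in>C1. (Cs \<union> a) - {y} \<subseteq> c) \<and> (\<exists>c\<in>C2. (Cs \<union> b) - {y} \<subseteq> c) \<and>
                               (\<exists>c\<in>C2. (a \<union> Ds) - {x} \<subseteq> c) \<and> (\<exists>c\<in>C1. (b \<union> Ds) - {x} \<subseteq> c))
          in (concl C1 C2 \<or> concl C2 C1) \<and>
             max (card Cs) (card Ds) < min (card a - 2) (card b - 2))"
proof -
  consider "typeI_ord C1 C2 a b x y" | "typeI_ord C2 C1 a b x y"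
    using assms(3) unfolding typeI_def by blast
  then show ?thesis
  proof cases
    case 1
    then show ?thesis using typeI_ord_extends_to_chains[OF assms(1,2)] unfolding Let_def by blast
  next
    case 2
    then show ?thesis
      using typeI_ord_extends_to_chains[OF in_N2_swap[OF assms(1)] assms(2)] unfolding Let_def by blast
  qed
qed

end
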